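(* Fix a monomial order on $S$. Let $J$ be an ideal of $S$ and let $(E_i)_{i\in\Lambda}$ be an arbitrary (nonempty) family of monomial ideals of $S$ such that $(J,E_i)$ is a G-nice pair for every $i\in\Lambda$. Put $E=\bigcap_{i\in\Lambda}E_i$. Then $(J,E)$ is a G-nice pair and $\bigcap_{i\in\Lambda}(J+E_i)=J+E$. Moreover, if $\mathcal G_J$ is a Gröbner basis of $J$, then $\mathcal G_J\cup G(E)$ is a Gröbner basis of $\bigcap_{i\in\Lambda}(J+E_i)$.
   Context: $K$ is a field and $S=K[x_1,\ldots,x_n]$ with a fixed monomial order. For $0\neq f\in S$, $\mathrm{in}(f)$ denotes its leading monomial; for an ideal $I$, $\mathrm{in}(I)$ is the ideal generated by the leading monomials of the nonzero elements of $I$. A pair $(J,E)$ of ideals of $S$ is called Gröbner nice (G-nice) if $\mathrm{in}(J+E)=\mathrm{in}(J)+\mathrm{in}(E)$. For a monomial ideal $E$, $G(E)$ denotes its unique minimal set of monomial generators. *)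

theory Defs
  imports "HOL-Library.Poly_Mapping"
begin

(* Monomials in the variables of the finite type 'v are exponent vectors 'v \<Rightarrow>\<^sub>0 nat;
   polynomials over the field 'a are finitely supported maps from monomials to 'a,
   i.e. the type ('v \<Rightarrow>\<^sub>0 nat) \<Rightarrow>\<^sub>0 'a with convolution product: S = K[x_v | v \<in> 'v]. *)

type_synonym 'v monom = "'v \<Rightarrow>\<^sub>0 nat"
type_synonym ('v, 'a) mpoly = "('v \<Rightarrow>\<^sub>0 nat) \<Rightarrow>\<^sub>0 'a"

definition monomial_order :: "('v monom \<Rightarrow> 'v monom \<Rightarrow> bool) \<Rightarrow> bool" where
  "monomial_order ord \<longleftrightarrow>
     (\<forall>a. ord a a) \<and>
     (\<forall>a b. ord a b \<and> ord b a \<longrightarrow> a = b) \<and>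
     (\<forall>a b c. ord a b \<and> ord b c \<longrightarrow> ord a c) \<and>
     (\<forall>a b. ord a b \<or> ord b a) \<and>
     (\<forall>a. ord 0 a) \<and>
     (\<forall>a b c. ord a b \<longrightarrow> ord (a + c) (b + c))"

definition is_ideal :: "('v, 'a::comm_ring_1) mpoly set \<Rightarrow> bool" where
  "is_ideal I \<longleftrightarrow> 0 \<in> I \<and> (\<forall>f\<in>I. \<forall>g\<in>I. f + g \<in> I) \<and> (\<forall>r. \<forall>f\<in>I. r * f \<in> I)"

definition ideal_gen :: "('v, 'a::comm_ring_1) mpoly set \<Rightarrow> ('v, 'a) mpoly set" where
  "ideal_gen X = \<Inter> {I. is_ideal I \<and> X \<subseteq> I}"

definition ideal_sum :: "('v, 'a::comm_ring_1) mpoly set \<Rightarrow> ('v, 'a) mpoly set \<Rightarrow> ('v, 'a) mpoly set" where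
  "ideal_sum I J = {f + g | f g. f \<in> I \<and> g \<in> J}"

definition monom_poly :: "'v monom \<Rightarrow> ('v, 'a::comm_ring_1) mpoly" where
  "monom_poly u = Poly_Mapping.single u 1"

definition lead_monom :: "('v monom \<Rightarrow> 'v monom \<Rightarrow> bool) \<Rightarrow> ('v, 'a::comm_ring_1) mpoly \<Rightarrow> 'v monom" where
  "lead_monom ord f = (THE m. m \<in> Poly_Mapping.keys f \<and> (\<forall>m'\<in>Poly_Mapping.keys f. ord m' m))"

definition init_ideal :: "('v monom \<Rightarrow> 'v monom \<Rightarrow> bool) \<Rightarrow> ('v, 'a::comm_ring_1) mpoly set \<Rightarrow> ('v, 'a) mpoly set" where
  "init_ideal ord I = ideal_gen {monom_poly (lead_monom ord f) | f. f \<in> I \<and> f \<noteq> 0}"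

definition monomial_ideal :: "('v, 'a::comm_ring_1) mpoly set \<Rightarrow> bool" where
  "monomial_ideal E \<longleftrightarrow> (\<exists>U. E = ideal_gen (monom_poly ` U))"

definition g_nice :: "('v monom \<Rightarrow> 'v monom \<Rightarrow> bool) \<Rightarrow> ('v, 'a::comm_ring_1) mpoly set \<Rightarrow> ('v, 'a) mpoly set \<Rightarrow> bool" where
  "g_nice ord J E \<longleftrightarrow> init_ideal ord (ideal_sum J E) = ideal_sum (init_ideal ord J) (init_ideal ord E)"

definition monom_dvd :: "'v monom \<Rightarrow> 'v monom \<Rightarrow> bool" where
  "monom_dvd v u \<longleftrightarrow> (\<forall>x. Poly_Mapping.lookup v x \<le> Poly_Mapping.lookup u x)"

definition min_gens :: "('v, 'a::comm_ring_1) mpoly set \<Rightarrow> ('v, 'a) mpoly set" where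
  "min_gens E = {monom_poly u | u. monom_poly u \<in> E \<and>
                    (\<forall>v. monom_poly v \<in> E \<and> monom_dvd v u \<longrightarrow> v = u)}"

definition groebner_basis :: "('v monom \<Rightarrow> 'v monom \<Rightarrow> bool) \<Rightarrow> ('v, 'a::comm_ring_1) mpoly set \<Rightarrow> ('v, 'a) mpoly set \<Rightarrow> bool" where
  "groebner_basis ord G I \<longleftrightarrow> finite G \<and> G \<subseteq> I \<and>
     ideal_gen {monom_poly (lead_monom ord g) | g. g \<in> G \<and> g \<noteq> 0} = init_ideal ord I"

end

theory Submission
  imports Defs
begin

(* A polynomial f has a remainder r modulo J none of whose monomials lies in in(J): divide by
   leading terms along the monomial order, which is well-founded by Dickson's lemma. If f lies in
   J + E_i with (J, E_i) G-nice, the part of r whose monomials lie outside E_i is again in J + E_i;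
   were it nonzero, its leading monomial would lie in in(J + E_i) = in(J) + E_i, hence in in(J) or
   in E_i, which is impossible. So r lies in every E_i and f = (f - r) + r lies in J + E.
   The same monomial dichotomy gives in(J + E) = in(J) + E, and E = in(E) is generated by the
   finitely many monomials of G(E), so the leading monomials of G_J together with G(E) generate
   in(J + E). *)

section \<open>Polynomials and monomial divisibility\<close>

lemma lookup_single_mult_add:
  fixes g :: "'k::cancel_comm_monoid_add \<Rightarrow>\<^sub>0 'b::semiring_0"
  shows "Poly_Mapping.lookup (Poly_Mapping.single s c * g) (s + w) = c * Poly_Mapping.lookup g w"
proof -
  have "Poly_Mapping.lookup (Poly_Mapping.single s c * g) (s + w)
      = (\<Sum>l. (c * (\<Sum>q. Poly_Mapping.lookup g q when s + w = l + q)) when s = l)"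
    by (simp add: lookup_mult lookup_single when_mult)
  also have "\<dots> = c * (\<Sum>q. Poly_Mapping.lookup g q when s + w = s + q)"
    by simp
  also have "(\<Sum>q. Poly_Mapping.lookup g q when s + w = s + q) = (\<Sum>q. Poly_Mapping.lookup g q when w = q)"
    by (simp only: add_left_cancel)
  finally show ?thesis
    by simp
qed

lemma keys_single_mult:
  fixes g :: "'k::monoid_add \<Rightarrow>\<^sub>0 'b::semiring_0"
  shows "Poly_Mapping.keys (Poly_Mapping.single s c * g) \<subseteq> (\<lambda>b. s + b) ` Poly_Mapping.keys g"
  using keys_mult[of "Poly_Mapping.single s c" g] by (auto split: if_splits)

lemma sum_single_lookup_keys:
  "(\<Sum>w\<in>Poly_Mapping.keys f. Poly_Mapping.single w (Poly_Mapping.lookup f w)) = f"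
  by (rule poly_mapping_eqI) (simp add: lookup_sum lookup_single when_def in_keys_iff)

lemma ex_poly_mapping_restrict:
  fixes f :: "'k \<Rightarrow>\<^sub>0 'b::comm_monoid_add"
  obtains g where "\<And>k. Poly_Mapping.lookup g k = (if P k then Poly_Mapping.lookup f k else 0)"
proof -
  let ?B = "{w \<in> Poly_Mapping.keys f. P w}"
  define g where "g = (\<Sum>w\<in>?B. Poly_Mapping.single w (Poly_Mapping.lookup f w))"
  have "Poly_Mapping.lookup g k = (\<Sum>w\<in>?B. if w = k then Poly_Mapping.lookup f w else 0)" for k
    unfolding g_def lookup_sum lookup_single when_def by (simp only: eq_commute)
  also have "\<dots> k = (if P k then Poly_Mapping.lookup f k else 0)" for k
    by (simp add: sum.delta in_keys_iff)
  finally show thesis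
    by (rule that)
qed

lemma keys_monom_poly [simp]: "Poly_Mapping.keys (monom_poly u :: ('v, 'a::comm_ring_1) mpoly) = {u}"
  by (simp add: monom_poly_def)

lemma monom_poly_neq_zero [simp]: "(monom_poly u :: ('v, 'a::comm_ring_1) mpoly) \<noteq> 0"
  by (metis keys_monom_poly keys_zero insert_not_empty)

lemma monom_dvd_refl: "monom_dvd u u"
  by (simp add: monom_dvd_def)

lemma monom_dvd_trans: "monom_dvd u v \<Longrightarrow> monom_dvd v w \<Longrightarrow> monom_dvd u w"
  unfolding monom_dvd_def using order_trans by blast

lemma monom_dvd_add_left: "monom_dvd u b \<Longrightarrow> monom_dvd u (a + b)"
  by (simp add: monom_dvd_def lookup_add add_increasing)

lemma monom_dvd_diff_add: "monom_dvd u w \<Longrightarrow> (w - u) + u = w"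
  by (rule poly_mapping_eqI) (simp add: monom_dvd_def lookup_add lookup_minus)

lemma single_mult_monom_poly:
  "monom_dvd u w \<Longrightarrow> Poly_Mapping.single (w - u) c * (monom_poly u :: ('v, 'a::comm_ring_1) mpoly)
     = Poly_Mapping.single w c"
  by (simp add: monom_poly_def mult_single monom_dvd_diff_add)

section \<open>Dickson's lemma\<close>

lemma nat_seq_has_mono_subseq:
  fixes s :: "nat \<Rightarrow> nat"
  obtains g :: "nat \<Rightarrow> nat" where "strict_mono g" "\<And>i j. i \<le> j \<Longrightarrow> s (g i) \<le> s (g j)"
proof -
  \<comment> \<open>h k is a position beyond k where s attains its minimum over (k, \<infinity>); iterate h.\<close>
  define h where "h k = (SOME n. n > k \<and> (\<forall>m > k. s n \<le> s m))" for k
  have h: "h k > k \<and> (\<forall>m > k. s (h k) \<le> s m)" for k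
  proof -
    have "\<exists>n. n > k \<and> (\<forall>m > k. s n \<le> s m)"
      using ex_has_least_nat[of "\<lambda>n. n > k" "Suc k" s] by auto
    then show ?thesis
      unfolding h_def by (rule someI_ex)
  qed
  define g where "g = rec_nat (h 0) (\<lambda>_. h)"
  have g_Suc: "g (Suc k) = h (g k)" for k
    by (simp add: g_def)
  have g_less: "g k < g (Suc k)" for k
    using h[of "g k"] unfolding g_Suc by blast
  have "s (g k) \<le> s (g (Suc k))" for k
  proof (cases k)
    case 0
    then show ?thesis
      using h[of 0] g_less[of 0] by (simp add: g_def)
  next
    case (Suc k')
    then have "g k = h (g k')"
      by (simp add: g_Suc)
    then show ?thesis
      using h[of "g k'"] g_less[of k'] g_less[of k] by simp
  qed
  then have "s (g i) \<le> s (g j)" if "i \<le> j" for i j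
    using lift_Suc_mono_le[of "\<lambda>k. s (g k)"] that by blast
  moreover have "strict_mono g"
    using g_less by (simp add: strict_mono_Suc_iff)
  ultimately show thesis
    using that by blast
qed

lemma ex_subseq_lookup_mono:
  fixes m :: "nat \<Rightarrow> 'v monom"
  assumes "finite V"
  obtains f :: "nat \<Rightarrow> nat" where "strict_mono f"
    "\<And>i j x. i \<le> j \<Longrightarrow> x \<in> V \<Longrightarrow> Poly_Mapping.lookup (m (f i)) x \<le> Poly_Mapping.lookup (m (f j)) x"
  using assms
proof (induction V arbitrary: thesis rule: finite_induct)
  case empty
  have "strict_mono (id :: nat \<Rightarrow> nat)"
    by (simp add: strict_mono_def)
  then show ?case
    using empty.prems by blast
next
  case (insert x V)
  obtain f :: "nat \<Rightarrow> nat" where f: "strict_mono f"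
    "\<And>i j y. i \<le> j \<Longrightarrow> y \<in> V \<Longrightarrow> Poly_Mapping.lookup (m (f i)) y \<le> Poly_Mapping.lookup (m (f j)) y"
    using insert.IH by metis
  obtain g :: "nat \<Rightarrow> nat" where g: "strict_mono g"
    "\<And>i j. i \<le> j \<Longrightarrow> Poly_Mapping.lookup (m (f (g i))) x \<le> Poly_Mapping.lookup (m (f (g j))) x"
    by (rule nat_seq_has_mono_subseq[of "\<lambda>n. Poly_Mapping.lookup (m (f n)) x"]) (rule that)
  have "strict_mono (f \<circ> g)"
    using f(1) g(1) by (simp add: strict_mono_def)
  moreover have "Poly_Mapping.lookup (m ((f \<circ> g) i)) y \<le> Poly_Mapping.lookup (m ((f \<circ> g) j)) y"
    if "i \<le> j" "y \<in> insert x V" for i j y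
  proof (cases "y = x")
    case True
    then show ?thesis
      using g(2)[OF \<open>i \<le> j\<close>] by simp
  next
    case False
    have "g i \<le> g j"
      using g(1) \<open>i \<le> j\<close> by (simp add: strict_mono_less_eq)
    then show ?thesis
      using f(2) False that(2) by simp
  qed
  ultimately show ?case
    by (rule insert.prems)
qed

lemma dickson_lemma:
  fixes m :: "nat \<Rightarrow> ('v::finite) monom"
  obtains i j where "i < j" "monom_dvd (m i) (m j)"
proof -
  obtain f :: "nat \<Rightarrow> nat" where "strict_mono f"
    "\<And>i j x. i \<le> j \<Longrightarrow> x \<in> UNIV \<Longrightarrow> Poly_Mapping.lookup (m (f i)) x \<le> Poly_Mapping.lookup (m (f j)) x"
    using ex_subseq_lookup_mono[OF finite_UNIV] by blast
  then show thesis
    using that[of "f 0" "f 1"] by (simp add: strict_mono_def monom_dvd_def)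
qed

lemma finite_monom_dvd_minimal:
  fixes P :: "('v::finite) monom set"
  shows "finite {u \<in> P. \<forall>v\<in>P. monom_dvd v u \<longrightarrow> v = u}" (is "finite ?M")
proof (rule ccontr)
  assume "infinite ?M"
  then obtain f :: "nat \<Rightarrow> 'v monom" where f: "inj f" "range f \<subseteq> ?M"
    using infinite_countable_subset by blast
  obtain i j where "i < j" "monom_dvd (f i) (f j)"
    by (rule dickson_lemma)
  moreover have "f i \<in> P" "f j \<in> ?M"
    using f(2) by auto
  ultimately have "f i = f j"
    by blast
  then show False
    using f(1) \<open>i < j\<close> by (simp add: inj_eq)
qed

lemma ex_minimal_monom_dvd:
  fixes P :: "('v::finite) monom set"
  assumes "w \<in> P"
  obtains u where "u \<in> P" "monom_dvd u w" "\<And>v. v \<in> P \<Longrightarrow> monom_dvd v u \<Longrightarrow> v = u"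
proof -
  define deg :: "'v monom \<Rightarrow> nat" where "deg u = (\<Sum>x\<in>UNIV. Poly_Mapping.lookup u x)" for u
  have "w \<in> P \<and> monom_dvd w w"
    using assms monom_dvd_refl[of w] by blast
  then obtain u where u: "u \<in> P" "monom_dvd u w"
    and least: "\<And>v. v \<in> P \<Longrightarrow> monom_dvd v w \<Longrightarrow> deg u \<le> deg v"
    using ex_has_least_nat[of "\<lambda>u. u \<in> P \<and> monom_dvd u w" w deg] by blast
  have "v = u" if v: "v \<in> P" "monom_dvd v u" for v
  proof (rule poly_mapping_eqI)
    fix x
    have le: "Poly_Mapping.lookup v y \<le> Poly_Mapping.lookup u y" for y
      using v(2) by (simp add: monom_dvd_def)
    then have "deg v \<le> deg u"
      unfolding deg_def by (rule sum_mono)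
    then have "deg v = deg u"
      using least[OF v(1) monom_dvd_trans[OF v(2) u(2)]] by simp
    then show "Poly_Mapping.lookup v x = Poly_Mapping.lookup u x"
      unfolding deg_def by (rule sum_mono_inv) (simp_all add: le)
  qed
  then show thesis
    using that u by blast
qed

section \<open>Monomial orders and leading monomials\<close>

context
  fixes ord :: "'v monom \<Rightarrow> 'v monom \<Rightarrow> bool"
  assumes ord: "monomial_order ord"
begin

lemma ord_refl: "ord a a"
  and ord_antisym: "ord a b \<Longrightarrow> ord b a \<Longrightarrow> a = b"
  and ord_trans: "ord a b \<Longrightarrow> ord b c \<Longrightarrow> ord a c"
  and ord_linear: "ord a b \<or> ord b a"
  and ord_zero_least: "ord 0 a"
  and ord_add_right: "ord a b \<Longrightarrow> ord (a + c) (b + c)"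
  using ord unfolding monomial_order_def by blast+

lemma monom_dvd_imp_ord: "monom_dvd u w \<Longrightarrow> ord u w"
  using ord_add_right[OF ord_zero_least[of "w - u"], of u] by (simp add: monom_dvd_diff_add)

lemma ex_ord_max: "finite S \<Longrightarrow> S \<noteq> {} \<Longrightarrow> \<exists>m\<in>S. \<forall>m'\<in>S. ord m' m"
proof (induction S rule: finite_ne_induct)
  case (singleton x)
  then show ?case
    using ord_refl by blast
next
  case (insert x F)
  then obtain m where "m \<in> F" "\<forall>m'\<in>F. ord m' m"
    by blast
  then show ?case
    using ord_linear[of m x] ord_refl[of x] ord_trans[of _ m x] by blast
qed

lemma lead_monom_eqI:
  assumes "m \<in> Poly_Mapping.keys f" "\<And>m'. m' \<in> Poly_Mapping.keys f \<Longrightarrow> ord m' m"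
  shows "lead_monom ord f = m"
  unfolding lead_monom_def using assms ord_antisym by (intro the_equality) blast+

lemma lead_monom_in_keys: "f \<noteq> 0 \<Longrightarrow> lead_monom ord f \<in> Poly_Mapping.keys f"
  and lead_monom_max: "f \<noteq> 0 \<Longrightarrow> m \<in> Poly_Mapping.keys f \<Longrightarrow> ord m (lead_monom ord f)"
  using ex_ord_max[of "Poly_Mapping.keys f"] lead_monom_eqI by (metis finite_keys keys_eq_empty)+

lemma lead_monom_monom_poly [simp]: "lead_monom ord (monom_poly u :: ('v, 'a::comm_ring_1) mpoly) = u"
  by (rule lead_monom_eqI) (simp_all add: ord_refl)

end

context
  fixes ord :: "('v::finite) monom \<Rightarrow> 'v monom \<Rightarrow> bool"
  assumes ord: "monomial_order ord"
begin

lemma wf_monomial_order: "wf {(a, b). ord a b \<and> a \<noteq> b}"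
proof (rule ccontr)
  assume "\<not> ?thesis"
  then obtain f where f: "\<And>i. ord (f (Suc i)) (f i) \<and> f (Suc i) \<noteq> f i"
    unfolding wf_iff_no_infinite_down_chain by auto
  have descending: "ord (f j) (f i) \<and> (i < j \<longrightarrow> f j \<noteq> f i)" if "i \<le> j" for i j
    using that
  proof (induction j rule: dec_induct)
    case (step j)
    have "ord (f (Suc j)) (f i)"
      using f[of j] step.IH ord_trans[OF ord] by blast
    moreover have "f (Suc j) \<noteq> f i"
    proof
      assume "f (Suc j) = f i"
      then have "f j = f i"
        using f[of j] step.IH ord_antisym[OF ord] by metis
      then show False
        using f[of j] step.IH \<open>f (Suc j) = f i\<close> by (metis le_neq_implies_less step.hyps(1))
    qed
    ultimately show ?case
      by blast
  qed (simp add: ord_refl[OF ord])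
  obtain i j where "i < j" "monom_dvd (f i) (f j)"
    by (rule dickson_lemma)
  then show False
    using descending[of i j] monom_dvd_imp_ord[OF ord] ord_antisym[OF ord] by fastforce
qed

end

section \<open>Ideals\<close>

lemma is_ideal_zero: "is_ideal I \<Longrightarrow> 0 \<in> I"
  and is_ideal_add: "is_ideal I \<Longrightarrow> f \<in> I \<Longrightarrow> g \<in> I \<Longrightarrow> f + g \<in> I"
  and is_ideal_mult: "is_ideal I \<Longrightarrow> f \<in> I \<Longrightarrow> r * f \<in> I"
  unfolding is_ideal_def by blast+

lemma is_ideal_diff:
  fixes f :: "('v, 'a::comm_ring_1) mpoly"
  assumes "is_ideal I" "f \<in> I" "g \<in> I"
  shows "f - g \<in> I"
  using is_ideal_add[OF assms(1,2) is_ideal_mult[OF assms(1,3), of "- 1"]] by simp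

lemma is_ideal_sum:
  fixes g :: "'b \<Rightarrow> ('v, 'a::comm_ring_1) mpoly"
  assumes I: "is_ideal I" and g: "\<And>b. b \<in> B \<Longrightarrow> g b \<in> I"
  shows "sum g B \<in> I"
  using g
proof (induction B rule: infinite_finite_induct)
  case (insert b B)
  then show ?case
    using is_ideal_add[OF I] by simp
qed (simp_all add: is_ideal_zero[OF I])

lemma is_ideal_ideal_gen: "is_ideal (ideal_gen X)"
  unfolding ideal_gen_def is_ideal_def by blast

lemma ideal_gen_superset: "X \<subseteq> ideal_gen X"
  and ideal_gen_least: "is_ideal I \<Longrightarrow> X \<subseteq> I \<Longrightarrow> ideal_gen X \<subseteq> I"
  and ideal_gen_mono: "X \<subseteq> Y \<Longrightarrow> ideal_gen X \<subseteq> ideal_gen Y"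
  unfolding ideal_gen_def by blast+

lemma is_ideal_ideal_sum:
  fixes J E :: "('v, 'a::comm_ring_1) mpoly set"
  assumes J: "is_ideal J" and E: "is_ideal E"
  shows "is_ideal (ideal_sum J E)"
  unfolding is_ideal_def
proof (intro conjI ballI allI)
  show "0 \<in> ideal_sum J E"
    unfolding ideal_sum_def using is_ideal_zero[OF J] is_ideal_zero[OF E] by force
next
  fix a b
  assume "a \<in> ideal_sum J E" "b \<in> ideal_sum J E"
  then obtain f1 g1 f2 g2 where "a = f1 + g1" "b = f2 + g2" "f1 \<in> J" "g1 \<in> E" "f2 \<in> J" "g2 \<in> E"
    unfolding ideal_sum_def by blast
  moreover have "f1 + g1 + (f2 + g2) = (f1 + f2) + (g1 + g2)"
    by (simp add: algebra_simps)
  ultimately show "a + b \<in> ideal_sum J E"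
    unfolding ideal_sum_def using is_ideal_add[OF J] is_ideal_add[OF E] by blast
next
  fix r a
  assume "a \<in> ideal_sum J E"
  then obtain f g where "a = f + g" "f \<in> J" "g \<in> E"
    unfolding ideal_sum_def by blast
  moreover have "r * (f + g) = r * f + r * g"
    by (simp add: algebra_simps)
  ultimately show "r * a \<in> ideal_sum J E"
    unfolding ideal_sum_def using is_ideal_mult[OF J] is_ideal_mult[OF E] by blast
qed

lemma ideal_sum_upper1: "is_ideal E \<Longrightarrow> J \<subseteq> ideal_sum J E"
  and ideal_sum_upper2: "is_ideal J \<Longrightarrow> E \<subseteq> ideal_sum J E"
  unfolding ideal_sum_def using is_ideal_zero by force+

lemma ideal_sum_mono: "E \<subseteq> E' \<Longrightarrow> ideal_sum J E \<subseteq> ideal_sum J E'"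
  unfolding ideal_sum_def by blast

lemma ideal_sum_least:
  "is_ideal I \<Longrightarrow> J \<subseteq> I \<Longrightarrow> E \<subseteq> I \<Longrightarrow> ideal_sum J E \<subseteq> I"
  unfolding ideal_sum_def using is_ideal_add by blast

lemma ideal_gen_Un:
  fixes X Y :: "('v, 'a::comm_ring_1) mpoly set"
  shows "ideal_gen (X \<union> Y) = ideal_sum (ideal_gen X) (ideal_gen Y)"
proof
  have "X \<subseteq> ideal_sum (ideal_gen X) (ideal_gen Y)" "Y \<subseteq> ideal_sum (ideal_gen X) (ideal_gen Y)"
    using ideal_gen_superset ideal_sum_upper1[OF is_ideal_ideal_gen] ideal_sum_upper2[OF is_ideal_ideal_gen]
    by blast+
  then show "ideal_gen (X \<union> Y) \<subseteq> ideal_sum (ideal_gen X) (ideal_gen Y)"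
    by (simp add: ideal_gen_least is_ideal_ideal_sum is_ideal_ideal_gen)
  show "ideal_sum (ideal_gen X) (ideal_gen Y) \<subseteq> ideal_gen (X \<union> Y)"
    by (simp add: ideal_sum_least ideal_gen_mono is_ideal_ideal_gen)
qed

section \<open>Monomial ideals\<close>

definition monomial_ideal_of :: "'v monom set \<Rightarrow> ('v, 'a::comm_ring_1) mpoly set" where
  "monomial_ideal_of U = {f. \<forall>w\<in>Poly_Mapping.keys f. \<exists>u\<in>U. monom_dvd u w}"

lemma monomial_ideal_of_cong:
  "(\<And>w. (\<exists>u\<in>U. monom_dvd u w) \<longleftrightarrow> (\<exists>v\<in>V. monom_dvd v w)) \<Longrightarrow> monomial_ideal_of U = monomial_ideal_of V"
  by (simp add: monomial_ideal_of_def)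

lemma monom_poly_mem_monomial_ideal_of:
  "(monom_poly w :: ('v, 'a::comm_ring_1) mpoly) \<in> monomial_ideal_of U \<longleftrightarrow> (\<exists>u\<in>U. monom_dvd u w)"
  by (simp add: monomial_ideal_of_def)

lemma mem_monomial_ideal_of_iff_keys:
  "(f :: ('v, 'a::comm_ring_1) mpoly) \<in> monomial_ideal_of U
     \<longleftrightarrow> (\<forall>w\<in>Poly_Mapping.keys f. (monom_poly w :: ('v, 'a) mpoly) \<in> monomial_ideal_of U)"
  by (simp add: monomial_ideal_of_def)

lemma is_ideal_monomial_ideal_of: "is_ideal (monomial_ideal_of U :: ('v, 'a::comm_ring_1) mpoly set)"
  unfolding is_ideal_def
proof (intro conjI ballI allI)
  show "0 \<in> monomial_ideal_of U"
    by (simp add: monomial_ideal_of_def)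
next
  fix f g :: "('v, 'a) mpoly"
  assume "f \<in> monomial_ideal_of U" "g \<in> monomial_ideal_of U"
  then show "f + g \<in> monomial_ideal_of U"
    unfolding monomial_ideal_of_def using keys_add[of f g] by blast
next
  fix r f :: "('v, 'a) mpoly"
  assume "f \<in> monomial_ideal_of U"
  then show "r * f \<in> monomial_ideal_of U"
    unfolding monomial_ideal_of_def using keys_mult[of r f] monom_dvd_add_left by fastforce
qed

lemma ideal_gen_monom_poly_image:
  "ideal_gen (monom_poly ` U :: ('v, 'a::comm_ring_1) mpoly set) = monomial_ideal_of U"
proof
  have "(monom_poly u :: ('v, 'a) mpoly) \<in> monomial_ideal_of U" if "u \<in> U" for u
    using that monom_dvd_refl[of u] monom_poly_mem_monomial_ideal_of by blast
  then show "ideal_gen (monom_poly ` U) \<subseteq> (monomial_ideal_of U :: ('v, 'a) mpoly set)"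
    by (intro ideal_gen_least is_ideal_monomial_ideal_of) blast
  show "monomial_ideal_of U \<subseteq> (ideal_gen (monom_poly ` U) :: ('v, 'a) mpoly set)"
  proof
    fix f :: "('v, 'a) mpoly"
    assume f: "f \<in> monomial_ideal_of U"
    have "Poly_Mapping.single w (Poly_Mapping.lookup f w) \<in> ideal_gen (monom_poly ` U)"
      if "w \<in> Poly_Mapping.keys f" for w
    proof -
      from f that obtain u where u: "u \<in> U" "monom_dvd u w"
        by (auto simp: monomial_ideal_of_def)
      have "monom_poly u \<in> ideal_gen (monom_poly ` U)"
        using u(1) by (intro subsetD[OF ideal_gen_superset] imageI)
      then have "Poly_Mapping.single (w - u) (Poly_Mapping.lookup f w) * monom_poly u \<in> ideal_gen (monom_poly ` U)"
        by (rule is_ideal_mult[OF is_ideal_ideal_gen])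
      then show ?thesis
        by (simp only: single_mult_monom_poly[OF u(2)])
    qed
    then have "(\<Sum>w\<in>Poly_Mapping.keys f. Poly_Mapping.single w (Poly_Mapping.lookup f w)) \<in> ideal_gen (monom_poly ` U)"
      by (rule is_ideal_sum[OF is_ideal_ideal_gen])
    then show "f \<in> ideal_gen (monom_poly ` U)"
      by (simp only: sum_single_lookup_keys)
  qed
qed

lemma monomial_ideal_iff: "monomial_ideal E \<longleftrightarrow> (\<exists>U. E = monomial_ideal_of U)"
  by (simp add: monomial_ideal_def ideal_gen_monom_poly_image)

lemma monom_poly_mem_ideal_sum_monomial_ideal_of:
  assumes "(monom_poly w :: ('v, 'a::comm_ring_1) mpoly) \<in> ideal_sum (monomial_ideal_of U) (monomial_ideal_of V)"
  shows "(monom_poly w :: ('v, 'a) mpoly) \<in> monomial_ideal_of U \<or> (monom_poly w :: ('v, 'a) mpoly) \<in> monomial_ideal_of V"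
proof -
  obtain f g :: "('v, 'a) mpoly" where fg: "monom_poly w = f + g" "f \<in> monomial_ideal_of U" "g \<in> monomial_ideal_of V"
    using assms unfolding ideal_sum_def by blast
  have "Poly_Mapping.lookup f w + Poly_Mapping.lookup g w = 1"
    using arg_cong[OF fg(1), of "\<lambda>p. Poly_Mapping.lookup p w"] by (simp add: lookup_add monom_poly_def)
  then have "w \<in> Poly_Mapping.keys f \<or> w \<in> Poly_Mapping.keys g"
    by (auto simp: in_keys_iff)
  then show ?thesis
    using fg(2,3) mem_monomial_ideal_of_iff_keys by blast
qed

lemma INT_monomial_ideal_of:
  "(\<Inter>i\<in>I. monomial_ideal_of (U i) :: ('v, 'a::comm_ring_1) mpoly set)
     = monomial_ideal_of {w. \<forall>i\<in>I. \<exists>u\<in>U i. monom_dvd u w}"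
  unfolding monomial_ideal_of_def using monom_dvd_refl monom_dvd_trans by blast

lemma min_gens_eq_image:
  "min_gens E = monom_poly ` {u \<in> {u. monom_poly u \<in> E}. \<forall>v\<in>{u. monom_poly u \<in> E}. monom_dvd v u \<longrightarrow> v = u}"
  unfolding min_gens_def by auto

lemma finite_min_gens: "finite (min_gens (E :: ('v::finite, 'a::comm_ring_1) mpoly set))"
  unfolding min_gens_eq_image by (rule finite_imageI[OF finite_monom_dvd_minimal])

lemma ideal_gen_min_gens:
  "ideal_gen (min_gens (monomial_ideal_of U :: ('v::finite, 'a::comm_ring_1) mpoly set)) = monomial_ideal_of U"
proof -
  let ?E = "monomial_ideal_of U :: ('v, 'a) mpoly set"
  let ?P = "{u. monom_poly u \<in> ?E}"
  let ?M = "{u \<in> ?P. \<forall>v\<in>?P. monom_dvd v u \<longrightarrow> v = u}"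
  have "monomial_ideal_of ?M = ?E"
  proof (rule monomial_ideal_of_cong, rule iffI)
    fix w
    assume "\<exists>u\<in>?M. monom_dvd u w"
    then show "\<exists>u\<in>U. monom_dvd u w"
      using monom_dvd_trans by (auto simp: monom_poly_mem_monomial_ideal_of)
  next
    fix w
    assume "\<exists>u\<in>U. monom_dvd u w"
    then have "w \<in> ?P"
      by (simp add: monom_poly_mem_monomial_ideal_of)
    then obtain u where "u \<in> ?P" "monom_dvd u w" "\<And>v. v \<in> ?P \<Longrightarrow> monom_dvd v u \<Longrightarrow> v = u"
      by (rule ex_minimal_monom_dvd) (rule that)
    then show "\<exists>u\<in>?M. monom_dvd u w"
      by blast
  qed
  then show ?thesis
    by (simp only: min_gens_eq_image ideal_gen_monom_poly_image)
qed

section \<open>Initial ideals\<close>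

definition lead_monoms :: "('v monom \<Rightarrow> 'v monom \<Rightarrow> bool) \<Rightarrow> ('v, 'a::comm_ring_1) mpoly set \<Rightarrow> 'v monom set" where
  "lead_monoms ord I = {lead_monom ord f | f. f \<in> I \<and> f \<noteq> 0}"

lemma init_ideal_eq_monomial_ideal_of:
  fixes I :: "('v, 'a::comm_ring_1) mpoly set"
  shows "init_ideal ord I = monomial_ideal_of (lead_monoms ord I)"
proof -
  have "{monom_poly (lead_monom ord f) | f. f \<in> I \<and> f \<noteq> 0} = (monom_poly ` lead_monoms ord I :: ('v, 'a) mpoly set)"
    unfolding lead_monoms_def by blast
  then show ?thesis
    by (simp add: init_ideal_def ideal_gen_monom_poly_image)
qed

lemma is_ideal_init_ideal: "is_ideal (init_ideal ord I)"
  by (simp add: init_ideal_def is_ideal_ideal_gen)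

lemma init_ideal_mono: "I \<subseteq> I' \<Longrightarrow> init_ideal ord I \<subseteq> init_ideal ord I'"
  unfolding init_ideal_def by (rule ideal_gen_mono) blast

lemma monom_poly_lead_monom_mem_init_ideal:
  "f \<in> I \<Longrightarrow> f \<noteq> 0 \<Longrightarrow> monom_poly (lead_monom ord f) \<in> init_ideal ord I"
  unfolding init_ideal_def by (rule subsetD[OF ideal_gen_superset]) blast

lemma ideal_sum_init_ideal_subset:
  assumes "is_ideal J" "is_ideal E"
  shows "ideal_sum (init_ideal ord J) (init_ideal ord E) \<subseteq> init_ideal ord (ideal_sum J E)"
  using assms by (intro ideal_sum_least is_ideal_init_ideal init_ideal_mono ideal_sum_upper1 ideal_sum_upper2)

context
  fixes ord :: "'v monom \<Rightarrow> 'v monom \<Rightarrow> bool"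
  assumes ord: "monomial_order ord"
begin

lemma ex_lead_monoms_monomial_ideal_of_dvd:
  "(\<exists>u\<in>lead_monoms ord (monomial_ideal_of U :: ('v, 'a::comm_ring_1) mpoly set). monom_dvd u w)
     \<longleftrightarrow> (\<exists>u\<in>U. monom_dvd u w)"
proof
  assume "\<exists>u\<in>lead_monoms ord (monomial_ideal_of U :: ('v, 'a) mpoly set). monom_dvd u w"
  then obtain f :: "('v, 'a) mpoly" where f: "f \<in> monomial_ideal_of U" "f \<noteq> 0"
    and dvd: "monom_dvd (lead_monom ord f) w"
    unfolding lead_monoms_def by blast
  from f obtain u where "u \<in> U" "monom_dvd u (lead_monom ord f)"
    using lead_monom_in_keys[OF ord f(2)] unfolding monomial_ideal_of_def by blast
  then show "\<exists>u\<in>U. monom_dvd u w"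
    using dvd monom_dvd_trans by blast
next
  assume "\<exists>u\<in>U. monom_dvd u w"
  then have "(monom_poly w :: ('v, 'a) mpoly) \<in> monomial_ideal_of U"
    by (simp add: monom_poly_mem_monomial_ideal_of)
  then have "w \<in> lead_monoms ord (monomial_ideal_of U :: ('v, 'a) mpoly set)"
    unfolding lead_monoms_def
    by (intro CollectI exI[of _ "monom_poly w"]) (simp add: lead_monom_monom_poly[OF ord])
  then show "\<exists>u\<in>lead_monoms ord (monomial_ideal_of U :: ('v, 'a) mpoly set). monom_dvd u w"
    using monom_dvd_refl by blast
qed

lemma init_ideal_monomial_ideal_of:
  "init_ideal ord (monomial_ideal_of U :: ('v, 'a::comm_ring_1) mpoly set) = monomial_ideal_of U"
  unfolding init_ideal_eq_monomial_ideal_of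
  by (rule monomial_ideal_of_cong) (rule ex_lead_monoms_monomial_ideal_of_dvd)

lemma g_nice_monomial_ideal_of_iff:
  "g_nice ord J (monomial_ideal_of U)
     \<longleftrightarrow> init_ideal ord (ideal_sum J (monomial_ideal_of U)) = ideal_sum (init_ideal ord J) (monomial_ideal_of U)"
  by (simp add: g_nice_def init_ideal_monomial_ideal_of)

lemma monom_poly_mem_init_ideal_sum:
  fixes J :: "('v, 'a::comm_ring_1) mpoly set"
  assumes "g_nice ord J (monomial_ideal_of U)"
    and "monom_poly t \<in> init_ideal ord (ideal_sum J (monomial_ideal_of U))"
  shows "monom_poly t \<in> init_ideal ord J \<or> (monom_poly t :: ('v, 'a) mpoly) \<in> monomial_ideal_of U"
  using assms monom_poly_mem_ideal_sum_monomial_ideal_of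
  by (simp add: g_nice_monomial_ideal_of_iff init_ideal_eq_monomial_ideal_of)

lemma g_nice_INT_monomial_ideal_of:
  fixes J :: "('v, 'a::comm_ring_1) mpoly set"
  assumes J: "is_ideal J" and nice: "\<And>i. i \<in> I \<Longrightarrow> g_nice ord J (monomial_ideal_of (U i))"
  shows "g_nice ord J (\<Inter>i\<in>I. monomial_ideal_of (U i))"
proof -
  define W where "W = {w. \<forall>i\<in>I. \<exists>u\<in>U i. monom_dvd u w}"
  let ?E = "monomial_ideal_of W :: ('v, 'a) mpoly set"
  have E: "(\<Inter>i\<in>I. monomial_ideal_of (U i)) = ?E"
    unfolding W_def by (rule INT_monomial_ideal_of)
  have "monom_poly (lead_monom ord f) \<in> ideal_sum (init_ideal ord J) ?E"
    if f: "f \<in> ideal_sum J ?E" "f \<noteq> 0" for f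
  proof -
    let ?m = "monom_poly (lead_monom ord f) :: ('v, 'a) mpoly"
    have "?m \<in> init_ideal ord J \<or> ?m \<in> monomial_ideal_of (U i)" if "i \<in> I" for i
    proof (rule monom_poly_mem_init_ideal_sum[OF nice[OF that]])
      have "f \<in> ideal_sum J (monomial_ideal_of (U i))"
        using f(1) ideal_sum_mono[of ?E "monomial_ideal_of (U i)" J] E that by blast
      then show "?m \<in> init_ideal ord (ideal_sum J (monomial_ideal_of (U i)))"
        using f(2) by (rule monom_poly_lead_monom_mem_init_ideal)
    qed
    then have "?m \<in> init_ideal ord J \<or> ?m \<in> ?E"
      using E by blast
    then show ?thesis
      using ideal_sum_upper1[OF is_ideal_monomial_ideal_of] ideal_sum_upper2[OF is_ideal_init_ideal] by blast
  qed
  then have "init_ideal ord (ideal_sum J ?E) \<subseteq> ideal_sum (init_ideal ord J) ?E"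
    unfolding init_ideal_def[of ord "ideal_sum J ?E"]
    by (intro ideal_gen_least is_ideal_ideal_sum is_ideal_init_ideal is_ideal_monomial_ideal_of) blast
  moreover have "ideal_sum (init_ideal ord J) ?E \<subseteq> init_ideal ord (ideal_sum J ?E)"
    using ideal_sum_init_ideal_subset[OF J is_ideal_monomial_ideal_of, of ord W]
    by (simp only: init_ideal_monomial_ideal_of)
  ultimately show ?thesis
    unfolding E g_nice_monomial_ideal_of_iff by (rule antisym)
qed

end

section \<open>Standard remainders\<close>

definition standard :: "('v monom \<Rightarrow> 'v monom \<Rightarrow> bool) \<Rightarrow> ('v, 'a::comm_ring_1) mpoly set \<Rightarrow> ('v, 'a) mpoly \<Rightarrow> bool" where
  "standard ord J r \<longleftrightarrow> (\<forall>w\<in>Poly_Mapping.keys r. monom_poly w \<notin> init_ideal ord J)"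

lemma standard_add_single:
  assumes "standard ord J r" "monom_poly t \<notin> init_ideal ord J"
  shows "standard ord J (r + Poly_Mapping.single t c)"
proof -
  have "Poly_Mapping.keys (r + Poly_Mapping.single t c) \<subseteq> insert t (Poly_Mapping.keys r)"
    using keys_add[of r "Poly_Mapping.single t c"] by (auto split: if_splits)
  then show ?thesis
    using assms unfolding standard_def by blast
qed

context
  fixes ord :: "'v monom \<Rightarrow> 'v monom \<Rightarrow> bool"
  assumes ord: "monomial_order ord"
begin

lemma keys_diff_lead_term_less:
  assumes "f \<noteq> 0" "w \<in> Poly_Mapping.keys (f - Poly_Mapping.single (lead_monom ord f) c)"
    and "c = Poly_Mapping.lookup f (lead_monom ord f)"
  shows "ord w (lead_monom ord f) \<and> w \<noteq> lead_monom ord f"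
  using assms lead_monom_max[OF ord] keys_diff[of f "Poly_Mapping.single (lead_monom ord f) c"]
  by (auto simp: in_keys_iff lookup_minus split: if_splits)

lemma ex_reducer_lead_term:
  fixes f :: "('v, 'a::field) mpoly"
  assumes J: "is_ideal J" and f: "f \<noteq> 0"
    and t: "monom_poly (lead_monom ord f) \<in> init_ideal ord J"
  obtains q where "q \<in> J"
    "\<And>w. w \<in> Poly_Mapping.keys (f - q) \<Longrightarrow> ord w (lead_monom ord f) \<and> w \<noteq> lead_monom ord f"
proof -
  let ?t = "lead_monom ord f"
  obtain g where g: "g \<in> J" "g \<noteq> 0" "monom_dvd (lead_monom ord g) ?t"
    using t unfolding init_ideal_eq_monomial_ideal_of monom_poly_mem_monomial_ideal_of lead_monoms_def
    by blast
  define u where "u = lead_monom ord g"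
  define s where "s = ?t - u"
  have t_eq: "?t = s + u"
    using monom_dvd_diff_add[OF g(3)] by (simp add: s_def u_def add.commute)
  have gu: "Poly_Mapping.lookup g u \<noteq> 0"
    using lead_monom_in_keys[OF ord g(2)] by (simp add: u_def in_keys_iff)
  define q where "q = Poly_Mapping.single s (Poly_Mapping.lookup f ?t / Poly_Mapping.lookup g u) * g"
  have "q \<in> J"
    unfolding q_def using is_ideal_mult[OF J g(1)] .
  have lookup_q: "Poly_Mapping.lookup q ?t = Poly_Mapping.lookup f ?t"
    unfolding q_def t_eq by (simp add: lookup_single_mult_add gu)
  have "ord w ?t \<and> w \<noteq> ?t" if w: "w \<in> Poly_Mapping.keys (f - q)" for w
  proof -
    have "w \<noteq> ?t"
      using w lookup_q by (auto simp: in_keys_iff lookup_minus)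
    moreover have "ord w ?t"
      using w keys_diff[of f q]
    proof (elim subsetD[THEN UnE])
      assume "w \<in> Poly_Mapping.keys f"
      then show "ord w ?t"
        by (rule lead_monom_max[OF ord f])
    next
      assume "w \<in> Poly_Mapping.keys q"
      then obtain b where "b \<in> Poly_Mapping.keys g" "w = s + b"
        using keys_single_mult unfolding q_def by blast
      then show "ord w ?t"
        using ord_add_right[OF ord lead_monom_max[OF ord g(2)], of b s]
        by (simp add: t_eq u_def add.commute)
    qed
    ultimately show ?thesis
      by blast
  qed
  then show thesis
    using \<open>q \<in> J\<close> that by blast
qed

lemma standard_mem_monomial_ideal_of:
  fixes J :: "('v, 'a::comm_ring_1) mpoly set"
  assumes J: "is_ideal J" and nice: "g_nice ord J (monomial_ideal_of U)"
    and r: "r \<in> ideal_sum J (monomial_ideal_of U)" and std: "standard ord J r"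
  shows "r \<in> monomial_ideal_of U"
proof -
  let ?E = "monomial_ideal_of U :: ('v, 'a) mpoly set"
  obtain g where g: "\<And>w. Poly_Mapping.lookup g w
      = (if monom_poly w \<notin> ?E then Poly_Mapping.lookup r w else 0)"
    using ex_poly_mapping_restrict[of "\<lambda>w. monom_poly w \<notin> ?E" r] by blast
  have keys_g: "w \<in> Poly_Mapping.keys r" "monom_poly w \<notin> ?E" if "w \<in> Poly_Mapping.keys g" for w
    using that g[of w] by (auto simp: in_keys_iff split: if_splits)
  have "r - g \<in> ?E"
    unfolding mem_monomial_ideal_of_iff_keys[of "r - g"]
    using g by (auto simp: in_keys_iff lookup_minus split: if_splits)
  then have "g \<in> ideal_sum J ?E"
    using is_ideal_diff[OF is_ideal_ideal_sum[OF J is_ideal_monomial_ideal_of] r]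
      ideal_sum_upper2[OF J] by fastforce
  have "g = 0"
  proof (rule ccontr)
    assume "g \<noteq> 0"
    let ?t = "lead_monom ord g"
    have "monom_poly ?t \<in> init_ideal ord (ideal_sum J ?E)"
      using monom_poly_lead_monom_mem_init_ideal[OF \<open>g \<in> ideal_sum J ?E\<close> \<open>g \<noteq> 0\<close>] .
    then have "monom_poly ?t \<in> init_ideal ord J \<or> monom_poly ?t \<in> ?E"
      by (rule monom_poly_mem_init_ideal_sum[OF ord nice])
    then show False
      using keys_g[OF lead_monom_in_keys[OF ord \<open>g \<noteq> 0\<close>]] std unfolding standard_def by blast
  qed
  then show ?thesis
    using \<open>r - g \<in> ?E\<close> by simp
qed

end

context
  fixes ord :: "('v::finite) monom \<Rightarrow> 'v monom \<Rightarrow> bool"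
  assumes ord: "monomial_order ord"
begin

lemma ex_standard_remainder:
  fixes J :: "('v, 'a::field) mpoly set"
  assumes J: "is_ideal J"
  obtains r where "f - r \<in> J" "standard ord J r"
proof -
  have remainder: "\<forall>f. f \<noteq> 0 \<longrightarrow> lead_monom ord f = t \<longrightarrow> (\<exists>r. f - r \<in> J \<and> standard ord J r)" for t
  proof (induction t rule: wf_induct[OF wf_monomial_order[OF ord]])
    case (1 t)
    have IH: "\<exists>r. h - r \<in> J \<and> standard ord J r"
      if "\<And>w. w \<in> Poly_Mapping.keys h \<Longrightarrow> ord w t \<and> w \<noteq> t" for h
    proof (cases "h = 0")
      case True
      then show ?thesis
        using is_ideal_zero[OF J] by (intro exI[of _ 0]) (simp add: standard_def)
    next
      case False
      then show ?thesis
        using 1 that[OF lead_monom_in_keys[OF ord False]] by blast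
    qed
    show ?case
    proof (intro allI impI)
      fix f :: "('v, 'a) mpoly"
      assume f: "f \<noteq> 0" and t: "lead_monom ord f = t"
      show "\<exists>r. f - r \<in> J \<and> standard ord J r"
      proof (cases "monom_poly t \<in> init_ideal ord J")
        case True
        then obtain q where "q \<in> J" "\<And>w. w \<in> Poly_Mapping.keys (f - q) \<Longrightarrow> ord w t \<and> w \<noteq> t"
          using ex_reducer_lead_term[OF ord J f] t by metis
        with IH obtain r where "f - q - r \<in> J" "standard ord J r"
          by blast
        moreover have "f - r = (f - q - r) + q"
          by simp
        ultimately show ?thesis
          using is_ideal_add[OF J _ \<open>q \<in> J\<close>] by metis
      next
        case False
        define c where "c = Poly_Mapping.lookup f t"
        obtain r where r: "f - Poly_Mapping.single t c - r \<in> J" "standard ord J r"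
          using IH keys_diff_lead_term_less[OF ord f] t c_def by metis
        have "standard ord J (r + Poly_Mapping.single t c)"
          using standard_add_single[OF r(2) False] .
        moreover have "f - (r + Poly_Mapping.single t c) = f - Poly_Mapping.single t c - r"
          by simp
        ultimately show ?thesis
          using r(1) by metis
      qed
    qed
  qed
  show thesis
  proof (cases "f = 0")
    case True
    then show ?thesis
      using that[of 0] is_ideal_zero[OF J] by (simp add: standard_def)
  next
    case False
    then show ?thesis
      using remainder that by blast
  qed
qed

lemma INT_ideal_sum_monomial_ideal_of:
  fixes J :: "('v, 'a::field) mpoly set"
  assumes J: "is_ideal J" and nice: "\<And>i. i \<in> I \<Longrightarrow> g_nice ord J (monomial_ideal_of (U i))"
  shows "(\<Inter>i\<in>I. ideal_sum J (monomial_ideal_of (U i))) = ideal_sum J (\<Inter>i\<in>I. monomial_ideal_of (U i))"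
proof
  show "(\<Inter>i\<in>I. ideal_sum J (monomial_ideal_of (U i))) \<subseteq> ideal_sum J (\<Inter>i\<in>I. monomial_ideal_of (U i))"
  proof
    fix f
    assume f: "f \<in> (\<Inter>i\<in>I. ideal_sum J (monomial_ideal_of (U i)))"
    obtain r where r: "f - r \<in> J" "standard ord J r"
      by (rule ex_standard_remainder[OF J])
    have "r \<in> monomial_ideal_of (U i)" if i: "i \<in> I" for i
    proof (rule standard_mem_monomial_ideal_of[OF ord J nice[OF i] _ r(2)])
      let ?S = "ideal_sum J (monomial_ideal_of (U i))"
      have "f \<in> ?S" "f - r \<in> ?S"
        using f i r(1) ideal_sum_upper1[OF is_ideal_monomial_ideal_of] by blast+
      then have "f - (f - r) \<in> ?S"
        by (rule is_ideal_diff[OF is_ideal_ideal_sum[OF J is_ideal_monomial_ideal_of]])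
      then show "r \<in> ?S"
        by simp
    qed
    then show "f \<in> ideal_sum J (\<Inter>i\<in>I. monomial_ideal_of (U i))"
      unfolding ideal_sum_def using r(1) by (intro CollectI exI[of _ "f - r"] exI[of _ r]) simp
  qed
  show "ideal_sum J (\<Inter>i\<in>I. monomial_ideal_of (U i)) \<subseteq> (\<Inter>i\<in>I. ideal_sum J (monomial_ideal_of (U i)))"
    using ideal_sum_mono by (intro INT_greatest) blast
qed

end

section \<open>Groebner bases of the intersection\<close>

lemma groebner_basis_Un_min_gens:
  fixes J :: "('v::finite, 'a::comm_ring_1) mpoly set"
  assumes ord: "monomial_order ord" and J: "is_ideal J"
    and nice: "g_nice ord J (monomial_ideal_of U)" and GJ: "groebner_basis ord GJ J"
  shows "groebner_basis ord (GJ \<union> min_gens (monomial_ideal_of U)) (ideal_sum J (monomial_ideal_of U))"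
proof -
  let ?E = "monomial_ideal_of U :: ('v, 'a) mpoly set"
  let ?lead = "\<lambda>G. {monom_poly (lead_monom ord g) | g. g \<in> G \<and> g \<noteq> 0} :: ('v, 'a) mpoly set"
  have "g = monom_poly (lead_monom ord g) \<and> g \<noteq> 0" if "g \<in> min_gens ?E" for g
    using that by (auto simp: min_gens_def lead_monom_monom_poly[OF ord])
  then have "?lead (min_gens ?E) = min_gens ?E"
    by (smt (verit) Collect_cong Collect_mem_eq)
  then have "?lead (GJ \<union> min_gens ?E) = ?lead GJ \<union> min_gens ?E"
    by blast
  then have "ideal_gen (?lead (GJ \<union> min_gens ?E)) = ideal_sum (init_ideal ord J) ?E"
    using GJ by (simp add: ideal_gen_Un ideal_gen_min_gens groebner_basis_def)
  also have "\<dots> = init_ideal ord (ideal_sum J ?E)"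
    using nice by (simp add: g_nice_monomial_ideal_of_iff[OF ord])
  finally have "ideal_gen (?lead (GJ \<union> min_gens ?E)) = init_ideal ord (ideal_sum J ?E)" .
  moreover have "GJ \<union> min_gens ?E \<subseteq> ideal_sum J ?E"
    using GJ ideal_sum_upper1[OF is_ideal_monomial_ideal_of] ideal_sum_upper2[OF J]
    unfolding groebner_basis_def min_gens_def by blast
  ultimately show ?thesis
    using GJ finite_min_gens by (simp add: groebner_basis_def)
qed

theorem mainTheorem6:
  fixes ord :: "('v::finite) monom \<Rightarrow> 'v monom \<Rightarrow> bool"
    and J :: "('v, 'a::field) mpoly set"
    and \<Lambda> :: "'i set"
    and Es :: "'i \<Rightarrow> ('v, 'a) mpoly set"
  assumes "monomial_order ord"
    and "is_ideal J"
    and "\<Lambda> \<noteq> {}"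
    and "\<And>i. i \<in> \<Lambda> \<Longrightarrow> monomial_ideal (Es i)"
    and "\<And>i. i \<in> \<Lambda> \<Longrightarrow> g_nice ord J (Es i)"
  shows "g_nice ord J (\<Inter>i\<in>\<Lambda>. Es i) \<and>
         (\<Inter>i\<in>\<Lambda>. ideal_sum J (Es i)) = ideal_sum J (\<Inter>i\<in>\<Lambda>. Es i) \<and>
         (\<forall>GJ. groebner_basis ord GJ J \<longrightarrow>
           groebner_basis ord (GJ \<union> min_gens (\<Inter>i\<in>\<Lambda>. Es i)) (\<Inter>i\<in>\<Lambda>. ideal_sum J (Es i)))"
proof -
  note ord = assms(1) and J = assms(2)
  obtain U where U: "\<And>i. i \<in> \<Lambda> \<Longrightarrow> Es i = monomial_ideal_of (U i)"
    using bchoice[of \<Lambda> "\<lambda>i V. Es i = monomial_ideal_of V"] assms(4) monomial_ideal_iff by metis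
  have nice: "\<And>i. i \<in> \<Lambda> \<Longrightarrow> g_nice ord J (monomial_ideal_of (U i))"
    using assms(5) U by metis
  define W where "W = {w. \<forall>i\<in>\<Lambda>. \<exists>u\<in>U i. monom_dvd u w}"
  have E: "(\<Inter>i\<in>\<Lambda>. Es i) = monomial_ideal_of W"
    using INT_monomial_ideal_of[of U \<Lambda>] U by (simp add: W_def)
  have sums: "(\<Inter>i\<in>\<Lambda>. ideal_sum J (Es i)) = ideal_sum J (monomial_ideal_of W)"
    using INT_ideal_sum_monomial_ideal_of[where I = \<Lambda> and U = U, OF ord J nice] U E by simp
  have "g_nice ord J (monomial_ideal_of W)"
    using g_nice_INT_monomial_ideal_of[where I = \<Lambda> and U = U, OF ord J nice] U E by simp
  then show ?thesis
    unfolding sums E using groebner_basis_Un_min_gens[OF ord J] by blast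
qed

end
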